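(* Let $Q=(-\frac12,\frac12)^N$ and let $f:\mathbb{R}^N\times\mathbb{R}^d\to[0,+\infty)$ be measurable and $Q$-periodic in the first variable, Lipschitz continuous in the second variable, with $C_1|\zeta|\le f(x,\zeta)\le C_2(1+|\zeta|)$. Let $\mathcal{A}=\sum_{i=1}^NA^{(i)}\partial_{x_i}$ with $A^{(i)}\in\mathbb{R}^{M\times d}$. For $b\in\mathbb{R}^d$ and $\gamma\in Q$ define $$f^\gamma_{\mathcal{A}\text{-hom}}(b):=\inf_{R\in\mathbb{N}}\inf\Big\{\frac{1}{|RQ|}\int_{RQ}f(y+\gamma,b+w(y))\,dy:\ w\in L^1_{RQ\text{-per}}(\mathbb{R}^N;\mathbb{R}^d),\ \mathcal{A}w=0,\ \frac{1}{|RQ|}\int_{RQ}w=0\Big\},$$ and let $f_{\mathcal{A}\text{-hom}}(b):=f^0_{\mathcal{A}\text{-hom}}(b)$. Then $f_{\mathcal{A}\text{-hom}}(b)=f^\gamma_{\mathcal{A}\text{-hom}}(b)$ for every $b\in\mathbb{R}^d$ and $\gamma\in Q$.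
   Context: $L^1_{RQ\text{-per}}(\mathbb{R}^N;\mathbb{R}^d)$ denotes functions integrable on $RQ$ extended $RQ$-periodically to $\mathbb{R}^N$; $\mathcal{A}w=0$ is meant in the sense of distributions on $\mathbb{R}^N$. *)

theory Defs
  imports "HOL-Analysis.Analysis"
begin

definition cube :: "real \<Rightarrow> (real^'n) set" where
  "cube r = box (- ((r/2) *\<^sub>R One)) ((r/2) *\<^sub>R One)"

definition pderiv_i :: "'n \<Rightarrow> (real^'n \<Rightarrow> real) \<Rightarrow> real^'n \<Rightarrow> real" where
  "pderiv_i i \<phi> x = frechet_derivative \<phi> (at x) (axis i 1)"

fun iter_pderiv :: "'n list \<Rightarrow> (real^'n \<Rightarrow> real) \<Rightarrow> real^'n \<Rightarrow> real" where
  "iter_pderiv [] \<phi> = \<phi>"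
| "iter_pderiv (i # is) \<phi> = pderiv_i i (iter_pderiv is \<phi>)"

definition smooth_fun :: "(real^'n \<Rightarrow> real) \<Rightarrow> bool" where
  "smooth_fun \<phi> \<longleftrightarrow> (\<forall>is x. iter_pderiv is \<phi> differentiable (at x))"

definition test_fun :: "(real^'n \<Rightarrow> real) \<Rightarrow> bool" where
  "test_fun \<phi> \<longleftrightarrow> smooth_fun \<phi> \<and> compact (closure {x. \<phi> x \<noteq> 0})"

text \<open>A w = sum_i A^(i) d_i w = 0 in the sense of distributions on R^N
  (tested against scalar test functions, componentwise).\<close>
definition A_free :: "('n \<Rightarrow> real^'d^'m) \<Rightarrow> (real^'n \<Rightarrow> real^'d) \<Rightarrow> bool" where
  "A_free A w \<longleftrightarrow> (\<forall>\<phi>. test_fun \<phi> \<longrightarrow>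
     (\<Sum>i\<in>UNIV. A i *v integral UNIV (\<lambda>x. pderiv_i i \<phi> x *\<^sub>R w x)) = 0)"

definition admissible :: "('n \<Rightarrow> real^'d^'m) \<Rightarrow> nat \<Rightarrow> (real^'n \<Rightarrow> real^'d) \<Rightarrow> bool" where
  "admissible A R w \<longleftrightarrow>
     (\<forall>y i. w (y + real R *\<^sub>R axis i 1) = w y)
     \<and> w absolutely_integrable_on cube (real R)
     \<and> A_free A w
     \<and> integral (cube (real R)) w = 0"

definition f_hom :: "('n \<Rightarrow> real^'d^'m) \<Rightarrow> (real^'n \<Rightarrow> real^'d \<Rightarrow> real)
     \<Rightarrow> real^'n \<Rightarrow> real^'d \<Rightarrow> real" where
  "f_hom A f \<gamma> b = Inf {integral (cube (real R)) (\<lambda>y. f (y + \<gamma>) (b + w y)) / real R ^ CARD('n)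
       | R w. R \<ge> 1 \<and> admissible A R w}"

end

theory Submission
  imports Defs
begin

text \<open>Translating an admissible field, \<open>w \<mapsto> w(\<cdot> + \<gamma>)\<close>, keeps it admissible: periodicity, the zero
  mean and the \<open>\<A>\<close>-freeness are all translation invariant (for the last, move the translation onto
  the test function). Since \<open>f\<close> is \<open>Q\<close>-periodic, hence \<open>RQ\<close>-periodic, the integrand
  \<open>y \<mapsto> f(y, b + w(y))\<close> is \<open>RQ\<close>-periodic, and the integral of an \<open>RQ\<close>-periodic function over
  any translate of the cell \<open>RQ\<close> is the same. So the sets whose infima define
  \<open>f\<^sup>\<gamma>\<close> and \<open>f\<^sup>0\<close> coincide.\<close>

abbreviation closed_cube :: "real \<Rightarrow> (real^'n) set" where
  "closed_cube r \<equiv> cbox (- ((r/2) *\<^sub>R One)) ((r/2) *\<^sub>R One)"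

lemma periodic_int_multiple:
  fixes g :: "'a::real_vector \<Rightarrow> 'b" and k :: int and r :: real
  assumes per: "\<And>y. g (y + r *\<^sub>R e) = g y"
  shows "g (y + (real_of_int k * r) *\<^sub>R e) = g y"
proof -
  have nat_multiple: "g (y + (real n * r) *\<^sub>R e) = g y" for n y
  proof (induction n arbitrary: y)
    case (Suc n)
    have "y + (real (Suc n) * r) *\<^sub>R e = (y + (real n * r) *\<^sub>R e) + r *\<^sub>R e"
      by (simp add: algebra_simps)
    then show ?case using per Suc by metis
  qed simp
  show ?thesis
  proof (cases "k \<ge> 0")
    case True
    then show ?thesis using nat_multiple[where n="nat k"] by simp
  next
    case False
    have "y = (y + (real_of_int k * r) *\<^sub>R e) + (real (nat (-k)) * r) *\<^sub>R e"
      using False by (simp add: algebra_simps)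
    then show ?thesis using nat_multiple by metis
  qed
qed

lemma cart_One_nth: "(One :: real^'n) $ j = 1"
  by (simp add: cart_eq_inner_axis)

lemma mem_closed_cube_cart:
  "(y :: real^'n) \<in> closed_cube r \<longleftrightarrow> (\<forall>j. -(r/2) \<le> y$j \<and> y$j \<le> r/2)"
  by (simp only: mem_box_cart vector_scaleR_component vector_uminus_component cart_One_nth) simp

lemma mem_closed_cube_axis:
  "(y :: real^'n) \<in> closed_cube r \<longleftrightarrow>
   (\<forall>j. j \<noteq> i \<longrightarrow> -(r/2) \<le> y$j \<and> y$j \<le> r/2) \<and> -(r/2) \<le> y$i \<and> y$i \<le> r/2"
  unfolding mem_closed_cube_cart by metis

lemma axis_shift_nth:
  "(y + t *\<^sub>R axis i 1 :: real^'n) $ j = y$j + (if j = i then t else 0)"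
  by (simp add: axis_def)

lemma mem_closed_cube_axis_shift:
  "(y + t *\<^sub>R axis i 1 :: real^'n) \<in> closed_cube r \<longleftrightarrow>
   (\<forall>j. j \<noteq> i \<longrightarrow> -(r/2) \<le> y$j \<and> y$j \<le> r/2) \<and> -(r/2) \<le> y$i + t \<and> y$i + t \<le> r/2"
  unfolding mem_closed_cube_axis[of _ r i] axis_shift_nth by simp

lemma has_integral_translate_cbox:
  fixes g :: "'a::euclidean_space \<Rightarrow> 'b::real_normed_vector"
  assumes "(g has_integral I) (cbox a b)"
  shows "((\<lambda>y. g (y + c)) has_integral I) {y. y + c \<in> cbox a b}"
proof -
  have "cbox (a - c) (b - c) = {y. y + c \<in> cbox a b}"
    by (auto simp: mem_box algebra_simps inner_diff_left inner_add_left)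
  then show ?thesis using has_integral_shift_cbox[OF assms, of c] by simp
qed

text \<open>Cut the cube at \<open>y$i = r/2 - t\<close>: translation by \<open>t\<close> maps the lower piece onto the slab
  \<open>y$i \<ge> t - r/2\<close> of the cube, and translation by \<open>t - r\<close>, allowed by periodicity, maps the
  upper piece onto the complementary slab.\<close>
lemma has_integral_periodic_axis_shift_bounded:
  fixes g :: "real^'n \<Rightarrow> 'b::banach"
  assumes t: "0 \<le> t" "t \<le> r"
    and per: "\<And>y. g (y + r *\<^sub>R axis i 1) = g y"
    and int: "g integrable_on closed_cube r"
  shows "((\<lambda>y. g (y + t *\<^sub>R axis i 1)) has_integral integral (closed_cube r) g) (closed_cube r)"
proof -
  let ?C = "closed_cube r :: (real^'n) set"
  define e :: "real^'n" where "e = axis i 1"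
  have e: "e \<in> Basis" unfolding e_def by (simp add: cart_eq_inner_axis)
  define L where "L = ?C \<inter> {x. x \<bullet> e \<le> t - r/2}"
  define U where "U = ?C \<inter> {x. x \<bullet> e \<ge> t - r/2}"
  obtain pL qL where L: "L = cbox pL qL" using interval_split(1)[OF e] L_def by blast
  obtain pU qU where U: "U = cbox pU qU" using interval_split(2)[OF e] U_def by blast
  have split: "integral ?C g = integral L g + integral U g"
    unfolding L_def U_def by (rule integral_split[OF int e])
  have "(g has_integral integral U g) (cbox pU qU)"
    using integrable_split(2)[OF int e] U U_def by (metis integrable_integral)
  moreover have "{y. y + t *\<^sub>R e \<in> cbox pU qU} = ?C \<inter> {x. x \<bullet> e \<le> r/2 - t}"
    unfolding U[symmetric] U_def e_def
    using t by (simp only: set_eq_iff mem_Collect_eq Int_iff mem_closed_cube_axis[of _ r i]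
        mem_closed_cube_axis_shift inner_axis axis_shift_nth) auto
  ultimately have lower: "((\<lambda>y. g (y + t *\<^sub>R e)) has_integral integral U g) (?C \<inter> {x. x \<bullet> e \<le> r/2 - t})"
    using has_integral_translate_cbox by metis
  have "(g has_integral integral L g) (cbox pL qL)"
    using integrable_split(1)[OF int e] L L_def by (metis integrable_integral)
  moreover have "{y. y + (t - r) *\<^sub>R e \<in> cbox pL qL} = ?C \<inter> {x. x \<bullet> e \<ge> r/2 - t}"
    unfolding L[symmetric] L_def e_def
    using t by (simp only: set_eq_iff mem_Collect_eq Int_iff mem_closed_cube_axis[of _ r i]
        mem_closed_cube_axis_shift inner_axis axis_shift_nth) auto
  moreover have "g (y + (t - r) *\<^sub>R e) = g (y + t *\<^sub>R e)" for y
    using per[of "y + (t - r) *\<^sub>R e"] unfolding e_def by (simp add: algebra_simps)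
  ultimately have upper: "((\<lambda>y. g (y + t *\<^sub>R e)) has_integral integral L g) (?C \<inter> {x. x \<bullet> e \<ge> r/2 - t})"
    using has_integral_translate_cbox[of g "integral L g" pL qL "(t - r) *\<^sub>R e"] by simp
  have "((\<lambda>y. g (y + t *\<^sub>R e)) has_integral integral U g + integral L g) ?C"
    using has_integral_split[OF lower upper e] .
  then show ?thesis unfolding split e_def by (simp add: add.commute)
qed

lemma has_integral_periodic_axis_shift:
  fixes g :: "real^'n \<Rightarrow> 'b::banach"
  assumes r: "r > 0"
    and per: "\<And>y. g (y + r *\<^sub>R axis i 1) = g y"
    and int: "g integrable_on closed_cube r"
  shows "((\<lambda>y. g (y + t *\<^sub>R axis i 1)) has_integral integral (closed_cube r) g) (closed_cube r)"
proof -
  define k where "k = \<lfloor>t / r\<rfloor>"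
  define s where "s = t - real_of_int k * r"
  have s: "0 \<le> s" "s \<le> r"
    unfolding s_def k_def
    using floor_divide_lower[OF r, of t] floor_divide_upper[OF r, of t] by (simp_all add: algebra_simps)
  have "g (y + t *\<^sub>R axis i 1) = g (y + s *\<^sub>R axis i 1)" for y
    using periodic_int_multiple[of g r "axis i 1" "y + s *\<^sub>R axis i 1" k] per
    unfolding s_def by (simp add: algebra_simps)
  then show ?thesis
    using has_integral_periodic_axis_shift_bounded[OF s per int] by simp
qed

lemma has_integral_periodic_shift:
  fixes g :: "real^'n \<Rightarrow> 'b::banach"
  assumes r: "r > 0"
    and per: "\<And>y i. g (y + r *\<^sub>R axis i 1) = g y"
    and int: "g integrable_on closed_cube r"
  shows "((\<lambda>y. g (y + v)) has_integral integral (closed_cube r) g) (closed_cube r)"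
proof -
  let ?C = "closed_cube r :: (real^'n) set"
  have "((\<lambda>y. g (y + (\<Sum>i\<in>S. v$i *\<^sub>R axis i 1))) has_integral integral ?C g) ?C" for S
  proof (induction S rule: infinite_finite_induct)
    case (insert j S)
    define h where "h = (\<lambda>y. g (y + (\<Sum>i\<in>S. v$i *\<^sub>R axis i 1)))"
    have h: "(h has_integral integral ?C g) ?C"
      unfolding h_def by (rule insert.IH)
    have "h (y + r *\<^sub>R axis i 1) = h y" for y i
      using per[of "y + (\<Sum>i\<in>S. v$i *\<^sub>R axis i 1)" i] unfolding h_def by (simp add: add_ac)
    from has_integral_periodic_axis_shift[where t = "v$j", OF r this has_integral_integrable[OF h]]
    have "((\<lambda>y. h (y + v$j *\<^sub>R axis j 1)) has_integral integral ?C g) ?C"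
      unfolding integral_unique[OF h] .
    then show ?case unfolding h_def using insert.hyps by (simp add: add_ac)
  qed (use int in \<open>simp_all add: integrable_integral\<close>)
  note this[of UNIV]
  moreover have "(\<Sum>i\<in>UNIV. v$i *\<^sub>R axis i 1) = v"
    using basis_expansion[of v] by (simp add: scalar_mult_eq_scaleR)
  ultimately show ?thesis by simp
qed

lemma integral_periodic_shift:
  fixes g :: "real^'n \<Rightarrow> 'b::banach"
  assumes r: "r > 0"
    and per: "\<And>y i. g (y + r *\<^sub>R axis i 1) = g y"
  shows "integral (closed_cube r) (\<lambda>y. g (y + v)) = integral (closed_cube r) g"
proof (cases "g integrable_on closed_cube r")
  case True
  then show ?thesis by (rule integral_unique[OF has_integral_periodic_shift[OF r per]])
next
  case False
  have "\<not> (\<lambda>y. g (y + v)) integrable_on closed_cube r"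
  proof (rule contrapos_nn[OF False])
    assume int: "(\<lambda>y. g (y + v)) integrable_on closed_cube r"
    have "g (y + r *\<^sub>R axis i 1 + v) = g (y + v)" for y i
      using per[of "y + v" i] by (simp add: add_ac)
    from has_integral_integrable[OF has_integral_periodic_shift[where v = "-v", OF r this int]]
    show "g integrable_on closed_cube r" by simp
      qed
  then show ?thesis using False by (simp add: not_integrable_integral)
qed

lemma integral_cube_periodic_shift:
  fixes g :: "real^'n \<Rightarrow> 'b::banach"
  assumes "r > 0" and "\<And>y i. g (y + r *\<^sub>R axis i 1) = g y"
  shows "integral (cube r) (\<lambda>y. g (y + v)) = integral (cube r) g"
  unfolding cube_def integral_open_interval using assms by (rule integral_periodic_shift)

lemma UNIV_neq_cbox: "\<not> (\<exists>a b. (UNIV::'a::euclidean_space set) = cbox a b)"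
  using bounded_cbox not_bounded_UNIV by metis

lemma has_integral_UNIV_shift:
  fixes g :: "'a::euclidean_space \<Rightarrow> 'b::banach"
  assumes "(g has_integral I) UNIV"
  shows "((\<lambda>x. g (x + c)) has_integral I) UNIV"
proof (subst has_integral_alt, simp only: UNIV_neq_cbox if_False, intro allI impI)
  fix e :: real assume e: "e > 0"
  obtain B where B: "B > 0" and HB: "\<forall>a b. ball 0 B \<subseteq> cbox a b \<longrightarrow>
      (\<exists>z. ((\<lambda>x. if x \<in> UNIV then g x else 0) has_integral z) (cbox a b) \<and> norm (z - I) < e)"
    using has_integral_altD[OF assms UNIV_neq_cbox e] by blast
  show "\<exists>B>0. \<forall>a b. ball 0 B \<subseteq> cbox a b \<longrightarrow>
      (\<exists>z. ((\<lambda>x. if x \<in> UNIV then g (x + c) else 0) has_integral z) (cbox a b) \<and> norm (z - I) < e)"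
  proof (intro exI[of _ "B + norm c"] conjI allI impI)
    show "B + norm c > 0" using B by (simp add: add_pos_nonneg)
    fix a b :: 'a
    assume sub: "ball 0 (B + norm c) \<subseteq> cbox a b"
    have "ball 0 B \<subseteq> cbox (a + c) (b + c)"
    proof
      fix y :: 'a assume "y \<in> ball 0 B"
      then have "norm y < B" by simp
      then have "norm (y - c) < B + norm c" using norm_triangle_ineq4[of y c] by linarith
      then have "y - c \<in> cbox a b" using sub by (simp add: subset_eq)
      then show "y \<in> cbox (a + c) (b + c)" by (auto simp: mem_box algebra_simps inner_diff_left inner_add_left)
    qed
    from HB[rule_format, OF this] obtain z where z: "(g has_integral z) (cbox (a + c) (b + c))" "norm (z - I) < e"
      by auto
    have "((\<lambda>x. g (x + c)) has_integral z) (cbox (a + c - c) (b + c - c))"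
      by (rule has_integral_shift_cbox[OF z(1)])
    then show "\<exists>z. ((\<lambda>x. if x \<in> UNIV then g (x + c) else 0) has_integral z) (cbox a b) \<and> norm (z - I) < e"
      using z(2) by auto
  qed
qed

lemma integral_UNIV_shift:
  fixes g :: "'a::euclidean_space \<Rightarrow> 'b::banach"
  shows "integral UNIV (\<lambda>x. g (x + c)) = integral UNIV g"
proof (cases "g integrable_on UNIV")
  case True
  then show ?thesis by (rule integral_unique[OF has_integral_UNIV_shift[OF integrable_integral]])
next
  case False
  have "\<not> (\<lambda>x. g (x + c)) integrable_on UNIV"
  proof
    assume "(\<lambda>x. g (x + c)) integrable_on UNIV"
    from has_integral_UNIV_shift[OF integrable_integral[OF this], of "-c"]
    have "((\<lambda>x. g (x + -c + c)) has_integral integral UNIV (\<lambda>x. g (x + c))) UNIV" .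
    then have "(g has_integral integral UNIV (\<lambda>x. g (x + c))) UNIV" by simp
    then have "g integrable_on UNIV" by (rule has_integral_integrable)
    then show False using False by simp
  qed
  then show ?thesis using False by (simp add: not_integrable_integral)
qed

lemma has_derivative_shift_at:
  assumes "(h has_derivative f') (at (z + c))"
  shows "((\<lambda>z. h (z + c)) has_derivative f') (at z)"
proof -
  have "((+) c has_derivative (\<lambda>x. x)) (at z)" by (rule shift_has_derivative_id)
  moreover have "(h has_derivative f') (at ((+) c z))" using assms by (simp add: add.commute)
  ultimately have "((h \<circ> (+) c) has_derivative (f' \<circ> (\<lambda>x. x))) (at z)" by (rule diff_chain_at)
  then show ?thesis by (simp add: o_def add.commute)
qed

lemma has_derivative_shift_iff:
  "((\<lambda>z. h (z + c)) has_derivative f') (at z) \<longleftrightarrow> (h has_derivative f') (at (z + c))"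
proof
  assume "((\<lambda>z. h (z + c)) has_derivative f') (at z)"
  then have "((\<lambda>z. h (z + c)) has_derivative f') (at (z + c + -c))" by simp
  from has_derivative_shift_at[OF this] show "(h has_derivative f') (at (z + c))" by simp
qed (rule has_derivative_shift_at)

lemma frechet_derivative_shift:
  "frechet_derivative (\<lambda>z. h (z + c)) (at z) = frechet_derivative h (at (z + c))"
  unfolding frechet_derivative_def has_derivative_shift_iff ..

lemma iter_pderiv_shift:
  "iter_pderiv is (\<lambda>z. \<phi> (z + c)) = (\<lambda>z. iter_pderiv is \<phi> (z + c))"
proof (induction "is")
  case Nil then show ?case by simp
next
  case (Cons i "is")
  show ?case by (rule ext) (simp add: Cons pderiv_i_def frechet_derivative_shift)
qed

lemma test_fun_shift:
  assumes "test_fun \<phi>"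
  shows "test_fun (\<lambda>z. \<phi> (z + c))"
proof -
  have sm: "smooth_fun (\<lambda>z. \<phi> (z + c))"
    unfolding smooth_fun_def iter_pderiv_shift
  proof (intro allI)
    fix "is" x
    have "iter_pderiv is \<phi> differentiable (at (x + c))"
      using assms unfolding test_fun_def smooth_fun_def by blast
    then show "(\<lambda>z. iter_pderiv is \<phi> (z + c)) differentiable at x"
      unfolding differentiable_def has_derivative_shift_iff .
  qed
  have eq: "{x. \<phi> (x + c) \<noteq> 0} = (+) (-c) ` {x. \<phi> x \<noteq> 0}"
    by (auto simp: image_iff) (metis add.commute add_diff_cancel diff_minus_eq_add uminus_add_conv_diff)
  have "compact (closure {x. \<phi> x \<noteq> 0})" using assms unfolding test_fun_def by blast
  then have "compact (closure {x. \<phi> (x + c) \<noteq> 0})"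
    unfolding eq closure_translation by (rule compact_translation)
  then show ?thesis using sm unfolding test_fun_def by blast
qed

lemma A_free_shift:
  assumes "A_free A w"
  shows "A_free A (\<lambda>x. w (x + v))"
  unfolding A_free_def
proof (intro allI impI)
  fix \<phi> :: "real^'a \<Rightarrow> real"
  assume t: "test_fun \<phi>"
  define \<psi> where "\<psi> = (\<lambda>z. \<phi> (z + -v))"
  have t\<psi>: "test_fun \<psi>" unfolding \<psi>_def by (rule test_fun_shift[OF t])
  have pd: "pderiv_i i \<psi> = (\<lambda>z. pderiv_i i \<phi> (z + -v))" for i
    using iter_pderiv_shift[of "[i]" \<phi> "-v"] unfolding \<psi>_def by simp
  have "integral UNIV (\<lambda>x. pderiv_i i \<phi> x *\<^sub>R w (x + v)) = integral UNIV (\<lambda>x. pderiv_i i \<psi> x *\<^sub>R w x)" for i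
  proof -
    have "integral UNIV (\<lambda>x. pderiv_i i \<phi> x *\<^sub>R w (x + v)) = integral UNIV (\<lambda>x. (\<lambda>z. pderiv_i i \<psi> z *\<^sub>R w z) (x + v))"
      unfolding pd by simp
    also have "\<dots> = integral UNIV (\<lambda>z. pderiv_i i \<psi> z *\<^sub>R w z)" by (rule integral_UNIV_shift)
    finally show ?thesis .
  qed
  then show "(\<Sum>i\<in>UNIV. A i *v integral UNIV (\<lambda>x. pderiv_i i \<phi> x *\<^sub>R w (x + v))) = 0"
    using assms t\<psi> unfolding A_free_def by simp
qed

lemma admissible_shift:
  fixes w :: "real^'n \<Rightarrow> real^'d"
  assumes adm: "admissible A R w" and R: "R \<ge> 1"
  shows "admissible A R (\<lambda>y. w (y + v))"
proof -
  have r: "real R > 0" using R by simp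
  have per: "w (y + real R *\<^sub>R axis i 1) = w y" for y i
    using adm unfolding admissible_def by blast
  have per_shift: "w (y + real R *\<^sub>R axis i 1 + v) = w (y + v)" for y i
    using per[of "y + v" i] by (simp add: add_ac)
  have "w absolutely_integrable_on closed_cube (real R)"
    using adm unfolding admissible_def cube_def absolutely_integrable_on_open_interval by blast
  then have "w integrable_on closed_cube (real R)" "(\<lambda>y. norm (w y)) integrable_on closed_cube (real R)"
    unfolding absolutely_integrable_on_def by auto
  moreover have "norm (w (y + real R *\<^sub>R axis i 1)) = norm (w y)" for y i
    by (simp add: per)
  ultimately have "(\<lambda>y. w (y + v)) integrable_on closed_cube (real R)"
    "(\<lambda>y. norm (w (y + v))) integrable_on closed_cube (real R)"
    using has_integral_periodic_shift[OF r, of w] has_integral_periodic_shift[OF r, of "\<lambda>y. norm (w y)"] per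
    by (blast intro: has_integral_integrable)+
  then have "(\<lambda>y. w (y + v)) absolutely_integrable_on closed_cube (real R)"
    unfolding absolutely_integrable_on_def by simp
  then have "(\<lambda>y. w (y + v)) absolutely_integrable_on cube (real R)"
    unfolding cube_def absolutely_integrable_on_open_interval .
  moreover have "integral (cube (real R)) (\<lambda>y. w (y + v)) = 0"
    using integral_cube_periodic_shift[OF r per] adm unfolding admissible_def by simp
  moreover have "A_free A (\<lambda>y. w (y + v))"
    using adm A_free_shift unfolding admissible_def by blast
  ultimately show ?thesis unfolding admissible_def using per_shift by blast
qed

definition hom_cell_averages ::
    "('n \<Rightarrow> real^'d^'m) \<Rightarrow> (real^'n \<Rightarrow> real^'d \<Rightarrow> real) \<Rightarrow> real^'n \<Rightarrow> real^'d \<Rightarrow> real set" where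
  "hom_cell_averages A f \<gamma> b =
     {integral (cube (real R)) (\<lambda>y. f (y + \<gamma>) (b + w y)) / real R ^ CARD('n)
       | R w. R \<ge> 1 \<and> admissible A R w}"

lemma f_hom_eq_Inf_hom_cell_averages: "f_hom A f \<gamma> b = Inf (hom_cell_averages A f \<gamma> b)"
  unfolding f_hom_def hom_cell_averages_def ..

lemma hom_cell_averages_shift_subset:
  fixes f :: "real^'n \<Rightarrow> real^'d \<Rightarrow> real"
  assumes per: "\<And>x z i. f (x + axis i 1) z = f x z"
  shows "hom_cell_averages A f \<gamma> b \<subseteq> hom_cell_averages A f (\<gamma> + v) b"
  unfolding hom_cell_averages_def
proof clarify
  fix R :: nat and w :: "real^'n \<Rightarrow> real^'d"
  assume R: "R \<ge> 1" and adm: "admissible A R w"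
  let ?G = "\<lambda>y. f (y + \<gamma>) (b + w y)"
  have per_w: "w (y + real R *\<^sub>R axis i 1) = w y" for y i
    using adm unfolding admissible_def by blast
  have per_f: "f (x + real R *\<^sub>R axis i 1) z = f x z" for x z i
    using periodic_int_multiple[of "\<lambda>x. f x z" 1 "axis i 1" x "int R"] per by simp
  have "?G (y + real R *\<^sub>R axis i 1) = ?G y" for y i
    using per_f[of "y + \<gamma>"] per_w by (simp add: add_ac)
  then have "integral (cube (real R)) (\<lambda>y. f (y + (\<gamma> + v)) (b + w (y + v))) = integral (cube (real R)) ?G"
    using integral_cube_periodic_shift[of "real R" ?G v] R by (simp add: add_ac)
  then show "\<exists>R' w'. integral (cube (real R)) ?G / real R ^ CARD('n) =
      integral (cube (real R')) (\<lambda>y. f (y + (\<gamma> + v)) (b + w' y)) / real R' ^ CARD('n)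
      \<and> R' \<ge> 1 \<and> admissible A R' w'"
    by (intro exI[of _ R] exI[of _ "\<lambda>y. w (y + v)"] conjI) (use R admissible_shift[OF adm R] in auto)
qed

lemma f_hom_shift:
  fixes f :: "real^'n \<Rightarrow> real^'d \<Rightarrow> real"
  assumes per: "\<And>x z i. f (x + axis i 1) z = f x z"
  shows "f_hom A f \<gamma> b = f_hom A f (\<gamma> + v) b"
proof -
  have "hom_cell_averages A f (\<gamma> + v) b \<subseteq> hom_cell_averages A f \<gamma> b"
    using hom_cell_averages_shift_subset[where f = f and \<gamma> = "\<gamma> + v" and v = "- v", OF per] by simp
  then have "hom_cell_averages A f \<gamma> b = hom_cell_averages A f (\<gamma> + v) b"
    using hom_cell_averages_shift_subset[where f = f, OF per] by (rule subset_antisym[rotated])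
  then show ?thesis unfolding f_hom_eq_Inf_hom_cell_averages by simp
qed

theorem proposition2p15:
  fixes f :: "real^'n \<Rightarrow> real^'d \<Rightarrow> real"
    and A :: "'n \<Rightarrow> real^'d^'m"
    and C1 C2 L :: real
  assumes meas: "(\<lambda>p. f (fst p) (snd p)) \<in> borel_measurable lebesgue"
    and nonneg: "\<And>x z. f x z \<ge> 0"
    and per: "\<And>x z i. f (x + axis i 1) z = f x z"
    and lip: "\<And>x z z'. \<bar>f x z - f x z'\<bar> \<le> L * norm (z - z')"
    and C1: "C1 > 0"
    and growth: "\<And>x z. C1 * norm z \<le> f x z \<and> f x z \<le> C2 * (1 + norm z)"
  shows "\<forall>b \<gamma>. \<gamma> \<in> cube 1 \<longrightarrow> f_hom A f 0 b = f_hom A f \<gamma> b"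
  using f_hom_shift[where f = f and \<gamma> = 0, OF per] by auto

end
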